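(* Let $\Gamma$ be a finite graph with $m$ vertices endowed with a total order $\prec$ on $V(\Gamma)$, let $p:\tilde\Gamma\to\Gamma$ be a covering, and let $F$ be a finite nonempty subset of $V(\tilde\Gamma)$. Then there exists an induced subgraph $\Lambda$ of $\tilde\Gamma$ with $|V(\Lambda)|\leqslant|F|\cdot2^{m-1}$ such that $\phi=p|_\Lambda:\Lambda\to\Gamma$ has SIPL for $F$ (with respect to $\prec$). Furthermore, if the induced subgraph of $\tilde\Gamma$ on $F$ is connected, then $\Lambda$ can be chosen to be connected.
   Context: All graphs are undirected and simplicial ($\tilde\Gamma$ may be infinite). A map of graphs sends vertices to vertices and adjacent vertices to adjacent vertices. A covering $p:\tilde\Gamma\to\Gamma$ is a surjective map of graphs whose restriction to the set of neighbours of each vertex $v'$ is a bijection onto the set of neighbours of $p(v')$. A path in $\Gamma$ is a tuple $(v_0,\dots,v_k)$ of pairwise distinct vertices with $\{v_i,v_{i+1}\}$ an edge for all $i$; it is semi-induced (w.r.t. $\prec$) if $\{v_i,v_j\}$ is not an edge whenever $j\ge i+2$ and $v_j\prec v_{i+1}$. For a map of graphs $\phi:\Lambda\to\Gamma$, a lift of $(v_0,\dots,v_k)$ is a path $(v_0',\dots,v_k')$ in $\Lambda$ with $\phi(v_i')=v_i$. $\phi$ has SIPL for $F\subseteq V(\Lambda)$ if for each $v'\in F$ every semi-induced path in $\Gamma$ starting at $\phi(v')$ has a lift to $\Lambda$ starting at $v'$. *)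

theory Defs
  imports Main
begin

definition graph :: "'a set \<Rightarrow> ('a \<Rightarrow> 'a \<Rightarrow> bool) \<Rightarrow> bool" where
  "graph V E \<longleftrightarrow> (\<forall>u v. E u v \<longrightarrow> u \<in> V \<and> v \<in> V) \<and>
                  (\<forall>u v. E u v \<longrightarrow> E v u) \<and> (\<forall>v. \<not> E v v)"

definition neighbours :: "('a \<Rightarrow> 'a \<Rightarrow> bool) \<Rightarrow> 'a \<Rightarrow> 'a set" where
  "neighbours E v = {u. E v u}"

definition graph_map ::
  "'b set \<Rightarrow> ('b \<Rightarrow> 'b \<Rightarrow> bool) \<Rightarrow> 'a set \<Rightarrow> ('a \<Rightarrow> 'a \<Rightarrow> bool) \<Rightarrow> ('b \<Rightarrow> 'a) \<Rightarrow> bool" where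
  "graph_map V' E' V E f \<longleftrightarrow> f ` V' \<subseteq> V \<and> (\<forall>u v. E' u v \<longrightarrow> E (f u) (f v))"

definition covering ::
  "'b set \<Rightarrow> ('b \<Rightarrow> 'b \<Rightarrow> bool) \<Rightarrow> 'a set \<Rightarrow> ('a \<Rightarrow> 'a \<Rightarrow> bool) \<Rightarrow> ('b \<Rightarrow> 'a) \<Rightarrow> bool" where
  "covering V' E' V E p \<longleftrightarrow> graph_map V' E' V E p \<and> p ` V' = V \<and>
     (\<forall>v\<in>V'. bij_betw p (neighbours E' v) (neighbours E (p v)))"

definition is_path :: "'a set \<Rightarrow> ('a \<Rightarrow> 'a \<Rightarrow> bool) \<Rightarrow> 'a list \<Rightarrow> bool" where
  "is_path V E xs \<longleftrightarrow> xs \<noteq> [] \<and> set xs \<subseteq> V \<and> distinct xs \<and>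
     (\<forall>i. Suc i < length xs \<longrightarrow> E (xs ! i) (xs ! Suc i))"

definition semi_induced :: "'a set \<Rightarrow> ('a \<Rightarrow> 'a \<Rightarrow> bool) \<Rightarrow> ('a \<Rightarrow> 'a \<Rightarrow> bool) \<Rightarrow> 'a list \<Rightarrow> bool" where
  "semi_induced V E lt xs \<longleftrightarrow> is_path V E xs \<and>
     (\<forall>i j. j < length xs \<longrightarrow> i + 2 \<le> j \<longrightarrow> lt (xs ! j) (xs ! Suc i) \<longrightarrow> \<not> E (xs ! i) (xs ! j))"

definition induced_edges :: "('a \<Rightarrow> 'a \<Rightarrow> bool) \<Rightarrow> 'a set \<Rightarrow> 'a \<Rightarrow> 'a \<Rightarrow> bool" where
  "induced_edges E L u v \<longleftrightarrow> u \<in> L \<and> v \<in> L \<and> E u v"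

definition is_lift ::
  "'b set \<Rightarrow> ('b \<Rightarrow> 'b \<Rightarrow> bool) \<Rightarrow> ('b \<Rightarrow> 'a) \<Rightarrow> 'a list \<Rightarrow> 'b list \<Rightarrow> bool" where
  "is_lift L EL phi xs ys \<longleftrightarrow> is_path L EL ys \<and> map phi ys = xs"

definition SIPL ::
  "'b set \<Rightarrow> ('b \<Rightarrow> 'b \<Rightarrow> bool) \<Rightarrow> 'a set \<Rightarrow> ('a \<Rightarrow> 'a \<Rightarrow> bool) \<Rightarrow> ('a \<Rightarrow> 'a \<Rightarrow> bool)
     \<Rightarrow> ('b \<Rightarrow> 'a) \<Rightarrow> 'b set \<Rightarrow> bool" where
  "SIPL L EL V E lt phi F \<longleftrightarrow>
     (\<forall>v'\<in>F. \<forall>xs. semi_induced V E lt xs \<and> hd xs = phi v' \<longrightarrow>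
        (\<exists>ys. is_lift L EL phi xs ys \<and> hd ys = v'))"

definition connected_graph :: "'a set \<Rightarrow> ('a \<Rightarrow> 'a \<Rightarrow> bool) \<Rightarrow> bool" where
  "connected_graph V E \<longleftrightarrow> (\<forall>u\<in>V. \<forall>v\<in>V. \<exists>xs. is_path V E xs \<and> hd xs = u \<and> last xs = v)"

definition strict_total_order_on :: "'a set \<Rightarrow> ('a \<Rightarrow> 'a \<Rightarrow> bool) \<Rightarrow> bool" where
  "strict_total_order_on V lt \<longleftrightarrow> (\<forall>x\<in>V. \<not> lt x x) \<and>
     (\<forall>x\<in>V. \<forall>y\<in>V. \<forall>z\<in>V. lt x y \<longrightarrow> lt y z \<longrightarrow> lt x z) \<and>
     (\<forall>x\<in>V. \<forall>y\<in>V. x \<noteq> y \<longrightarrow> lt x y \<or> lt y x)"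

end

theory Submission
  imports Defs "HOL-Library.Transitive_Closure_Table"
begin

(* Take for \<Lambda> the subgraph induced on the endpoints of all lifts, starting in F, of
   semi-induced paths of \<Gamma>. Lifts along a covering always exist and their prefixes are
   again such lifts, so these lifts stay inside \<Lambda> and SIPL holds. A semi-induced path
   is determined by its first vertex and its vertex set, since each next vertex is the
   \<prec>-least neighbour of the current one among the vertices still to come; and a lift is
   determined by its start and its image. Hence each v \<in> F contributes at most as many
   endpoints as there are subsets of V(\<Gamma>) containing p v, namely 2^(m-1). Every vertex of
   \<Lambda> is joined to F inside \<Lambda>, which gives connectedness. *)

lemma all_nat_Suc_conv: "(\<forall>i::nat. P i) \<longleftrightarrow> P 0 \<and> (\<forall>i. P (Suc i))"
  by (metis nat.exhaust)

lemma is_path_singleton [simp]: "is_path V E [a] \<longleftrightarrow> a \<in> V"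
  by (simp add: is_path_def)

lemma is_path_Cons_Cons:
  "is_path V E (a # b # xs) \<longleftrightarrow> a \<in> V \<and> a \<notin> set (b # xs) \<and> E a b \<and> is_path V E (b # xs)"
  unfolding is_path_def by (auto simp: All_less_Suc2)

lemma semi_induced_Cons_Cons:
  "semi_induced V E lt (a # b # xs) \<longleftrightarrow>
     is_path V E (a # b # xs) \<and> (\<forall>c\<in>set xs. lt c b \<longrightarrow> \<not> E a c) \<and> semi_induced V E lt (b # xs)"
  unfolding semi_induced_def
  by (subst all_nat_Suc_conv) (auto simp: All_less_Suc2 is_path_Cons_Cons all_set_conv_all_nth)

lemma is_path_take: "is_path V E xs \<Longrightarrow> 0 < n \<Longrightarrow> is_path V E (take n xs)"
  unfolding is_path_def by (auto dest: in_set_takeD)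

lemma semi_induced_take: "semi_induced V E lt xs \<Longrightarrow> 0 < n \<Longrightarrow> semi_induced V E lt (take n xs)"
  unfolding semi_induced_def by (auto simp: is_path_take)

lemma is_path_induced_edges:
  "is_path V E xs \<Longrightarrow> set xs \<subseteq> L \<Longrightarrow> is_path L (induced_edges E L) xs"
  unfolding is_path_def induced_edges_def by (auto simp: subset_iff)

lemma is_path_rtranclp: "is_path V E xs \<Longrightarrow> E\<^sup>*\<^sup>* (hd xs) (last xs)"
proof (induction xs rule: induct_list012)
  case (3 a b xs)
  then show ?case by (auto simp: is_path_Cons_Cons intro: converse_rtranclp_into_rtranclp)
qed (auto simp: is_path_def)

lemma rtrancl_path_imp_is_path:
  assumes "\<forall>u v. E u v \<longrightarrow> u \<in> V \<and> v \<in> V"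
  shows "rtrancl_path E u xs v \<Longrightarrow> u \<in> V \<Longrightarrow> distinct (u # xs) \<Longrightarrow> is_path V E (u # xs) \<and> last (u # xs) = v"
proof (induction rule: rtrancl_path.induct)
  case (step x y ys z)
  then show ?case
    using assms by (cases ys) (auto simp: is_path_Cons_Cons elim: rtrancl_path.cases)
qed simp

lemma rtranclp_imp_is_path:
  assumes "\<forall>u v. E u v \<longrightarrow> u \<in> V \<and> v \<in> V" "u \<in> V" "E\<^sup>*\<^sup>* u v"
  shows "\<exists>xs. is_path V E xs \<and> hd xs = u \<and> last xs = v"
proof -
  obtain xs where "rtrancl_path E u xs v" "distinct (u # xs)"
    using assms(3) rtrancl_path_distinct by (metis rtranclp_eq_rtrancl_path)
  then show ?thesis
    using rtrancl_path_imp_is_path[OF assms(1)] assms(2) by (metis list.sel(1))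
qed

lemma connected_graph_induced_edgesI:
  assumes "symp E" and "connected_graph F (induced_edges E F)" and "F \<subseteq> L"
    and reach: "\<And>u. u \<in> L \<Longrightarrow> \<exists>v\<in>F. (induced_edges E L)\<^sup>*\<^sup>* v u"
  shows "connected_graph L (induced_edges E L)"
proof -
  let ?R = "induced_edges E L"
  have "symp ?R"
    using assms(1) unfolding symp_def induced_edges_def by blast
  then have sym: "?R\<^sup>*\<^sup>* b a" if "?R\<^sup>*\<^sup>* a b" for a b
    using that symp_rtranclp sympD by metis
  have within_F: "?R\<^sup>*\<^sup>* a b" if ab: "a \<in> F" "b \<in> F" for a b
  proof -
    obtain zs where "is_path F (induced_edges E F) zs" "hd zs = a" "last zs = b"
      using assms(2)[unfolded connected_graph_def, rule_format, OF ab] by blast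
    then have "(induced_edges E F)\<^sup>*\<^sup>* a b"
      using is_path_rtranclp by metis
    moreover have "induced_edges E F \<le> ?R"
      using assms(3) unfolding induced_edges_def by blast
    ultimately show ?thesis
      using rtranclp_mono by (metis predicate2D)
  qed
  show ?thesis
    unfolding connected_graph_def
  proof (intro ballI)
    fix u w assume "u \<in> L" "w \<in> L"
    then obtain v1 v2 where "v1 \<in> F" "?R\<^sup>*\<^sup>* v1 u" "v2 \<in> F" "?R\<^sup>*\<^sup>* v2 w"
      using reach by blast
    then have "?R\<^sup>*\<^sup>* u w"
      using sym within_F rtranclp_trans by metis
    moreover have "\<forall>a b. ?R a b \<longrightarrow> a \<in> L \<and> b \<in> L"
      unfolding induced_edges_def by blast
    ultimately show "\<exists>xs. is_path L ?R xs \<and> hd xs = u \<and> last xs = w"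
      using rtranclp_imp_is_path \<open>u \<in> L\<close> by metis
  qed
qed

lemma semi_induced_eqI:
  assumes "strict_total_order_on V lt"
  shows "semi_induced V E lt xs \<Longrightarrow> semi_induced V E lt ys \<Longrightarrow> hd xs = hd ys \<Longrightarrow> set xs = set ys
    \<Longrightarrow> xs = ys"
proof (induction xs arbitrary: ys rule: induct_list012)
  case (2 a)
  then show ?case
    by (cases ys) (auto simp: semi_induced_def is_path_def subset_singleton_iff)
next
  case (3 a b xs)
  have "distinct (a # b # xs)" "distinct ys"
    using "3.prems"(1,2) by (auto simp: semi_induced_def is_path_def)
  then have "length ys = length (a # b # xs)"
    using "3.prems"(4) by (metis distinct_card)
  then obtain c zs where ys: "ys = a # c # zs"
    using "3.prems"(3) by (auto simp: length_Suc_conv)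
  have set_eq: "set (b # xs) = set (c # zs)"
    using "3.prems"(4) \<open>distinct (a # b # xs)\<close> \<open>distinct ys\<close> ys by auto
  have si: "semi_induced V E lt (a # b # xs)" "semi_induced V E lt (a # c # zs)"
    using "3.prems"(1,2) ys by auto
  have "b = c"
  proof (rule ccontr)
    assume "b \<noteq> c"
    then have "c \<in> set xs" "b \<in> set zs"
      using set_eq by auto
    moreover have "E a b" "E a c" "b \<in> V" "c \<in> V"
      using si by (auto simp: semi_induced_Cons_Cons is_path_Cons_Cons is_path_def)
    ultimately have "\<not> lt c b" "\<not> lt b c"
      using si by (auto simp: semi_induced_Cons_Cons)
    with \<open>b \<noteq> c\<close> \<open>b \<in> V\<close> \<open>c \<in> V\<close> show False
      using assms unfolding strict_total_order_on_def by blast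
  qed
  with "3.IH"[of "c # zs"] si set_eq show ?case
    by (simp add: semi_induced_Cons_Cons ys)
qed (simp add: semi_induced_def is_path_def)

lemma covering_lift_unique:
  assumes "covering V' E' V E p"
  shows "is_path V' E' ys \<Longrightarrow> is_path V' E' zs \<Longrightarrow> hd ys = hd zs \<Longrightarrow> map p ys = map p zs \<Longrightarrow> ys = zs"
proof (induction ys arbitrary: zs rule: induct_list012)
  case (2 a)
  then show ?case by (cases zs) auto
next
  case (3 a b ys)
  then obtain c zs' where zs: "zs = a # c # zs'"
    by (auto simp: map_eq_Cons_conv)
  have "a \<in> V'" "E' a b" "E' a c" "p b = p c"
    using "3.prems" zs by (auto simp: is_path_Cons_Cons)
  moreover have "inj_on p (neighbours E' a)"
    using assms \<open>a \<in> V'\<close> unfolding covering_def bij_betw_def by blast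
  ultimately have "b = c"
    by (auto simp: neighbours_def dest: inj_onD)
  with "3.IH"[of "c # zs'"] "3.prems" show ?case
    by (simp add: zs is_path_Cons_Cons)
qed simp

lemma covering_lift_exists:
  assumes "covering V' E' V E p" and "graph V' E'"
  shows "is_path V E xs \<Longrightarrow> v \<in> V' \<Longrightarrow> hd xs = p v \<Longrightarrow> \<exists>ys. is_path V' E' ys \<and> map p ys = xs \<and> hd ys = v"
proof (induction xs arbitrary: v rule: induct_list012)
  case (2 a)
  then show ?case by (intro exI[of _ "[v]"]) simp
next
  case (3 a b xs)
  have "p ` neighbours E' v = neighbours E (p v)"
    using assms(1) "3.prems"(2) unfolding covering_def by (metis bij_betw_imp_surj_on)
  moreover have "E a b"
    using "3.prems"(1) by (simp add: is_path_Cons_Cons)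
  ultimately obtain w where w: "E' v w" "p w = b"
    using "3.prems"(3) by (force simp: neighbours_def)
  have "w \<in> V'"
    using assms(2) w(1) unfolding graph_def by blast
  moreover have "is_path V E (b # xs)"
    using "3.prems"(1) by (simp add: is_path_Cons_Cons)
  ultimately obtain ys where ys: "is_path V' E' ys" "map p ys = b # xs" "hd ys = w"
    using "3.IH"(2) w(2) by (metis list.sel(1))
  have "distinct (map p (v # ys))"
    using "3.prems" ys by (simp add: is_path_def)
  then have "is_path V' E' (v # ys)"
    using ys w "3.prems"(2) by (cases ys) (auto simp: is_path_Cons_Cons)
  then show ?case
    using ys "3.prems"(3) by (intro exI[of _ "v # ys"]) simp
qed (simp add: is_path_def)

definition semi_induced_lifts ::
  "'b set \<Rightarrow> ('b \<Rightarrow> 'b \<Rightarrow> bool) \<Rightarrow> 'a set \<Rightarrow> ('a \<Rightarrow> 'a \<Rightarrow> bool) \<Rightarrow> ('a \<Rightarrow> 'a \<Rightarrow> bool)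
     \<Rightarrow> ('b \<Rightarrow> 'a) \<Rightarrow> 'b \<Rightarrow> 'b list set" where
  "semi_induced_lifts V' E' V E lt p v =
     {ys. is_path V' E' ys \<and> hd ys = v \<and> semi_induced V E lt (map p ys)}"

lemma inj_on_semi_induced_lifts:
  assumes "covering V' E' V E p" and "strict_total_order_on V lt"
  shows "inj_on (\<lambda>ys. set (map p ys)) (semi_induced_lifts V' E' V E lt p v)"
proof (rule inj_onI)
  fix ys zs
  assume ys: "ys \<in> semi_induced_lifts V' E' V E lt p v" and zs: "zs \<in> semi_induced_lifts V' E' V E lt p v"
    and "set (map p ys) = set (map p zs)"
  moreover have "ys \<noteq> []" "zs \<noteq> []"
    using ys zs by (auto simp: semi_induced_lifts_def is_path_def)
  ultimately have "map p ys = map p zs"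
    using semi_induced_eqI[OF assms(2)] by (auto simp: semi_induced_lifts_def hd_map)
  then show "ys = zs"
    using covering_lift_unique[OF assms(1)] ys zs by (auto simp: semi_induced_lifts_def)
qed

lemma card_semi_induced_lifts_le:
  assumes "covering V' E' V E p" and "strict_total_order_on V lt" and "finite V" and "v \<in> V'"
  shows "finite (semi_induced_lifts V' E' V E lt p v)"
    and "card (semi_induced_lifts V' E' V E lt p v) \<le> 2 ^ (card V - 1)"
proof -
  let ?lifts = "semi_induced_lifts V' E' V E lt p v" and ?vertex_set = "\<lambda>ys. set (map p ys)"
  have "p v \<in> V"
    using assms(1,4) by (auto simp: covering_def)
  have "?vertex_set ` ?lifts \<subseteq> insert (p v) ` Pow (V - {p v})"
  proof
    fix S assume "S \<in> ?vertex_set ` ?lifts"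
    then obtain ys where "ys \<in> ?lifts" "S = ?vertex_set ys" by blast
    then have "S \<subseteq> V" "p v \<in> S"
      by (auto simp: semi_induced_lifts_def semi_induced_def is_path_def intro: hd_in_set)
    then show "S \<in> insert (p v) ` Pow (V - {p v})"
      by (auto intro!: image_eqI[of _ _ "S - {p v}"])
  qed
  moreover have "finite (insert (p v) ` Pow (V - {p v}))"
    using assms(3) by simp
  ultimately show "finite ?lifts"
    using inj_on_semi_induced_lifts[OF assms(1,2)] finite_imageD finite_subset by metis
  have "card ?lifts = card (?vertex_set ` ?lifts)"
    using inj_on_semi_induced_lifts[OF assms(1,2)] by (simp add: card_image)
  also have "\<dots> \<le> card (insert (p v) ` Pow (V - {p v}))"
    using \<open>?vertex_set ` ?lifts \<subseteq> _\<close> \<open>finite (insert (p v) ` _)\<close> by (rule card_mono[rotated])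
  also have "\<dots> \<le> card (Pow (V - {p v}))"
    by (rule card_image_le) (use assms(3) in simp)
  also have "\<dots> = 2 ^ (card V - 1)"
    using assms(3) \<open>p v \<in> V\<close> by (simp add: card_Pow)
  finally show "card ?lifts \<le> 2 ^ (card V - 1)" .
qed

lemma semi_induced_lifts_prefix_closed:
  assumes "ys \<in> semi_induced_lifts V' E' V E lt p v"
  shows "set ys \<subseteq> last ` semi_induced_lifts V' E' V E lt p v"
proof
  fix x assume "x \<in> set ys"
  then obtain k where k: "k < length ys" "ys ! k = x"
    by (auto simp: in_set_conv_nth)
  then have "take (Suc k) ys \<in> semi_induced_lifts V' E' V E lt p v"
    using assms is_path_take semi_induced_take
    by (fastforce simp: semi_induced_lifts_def take_map)
  moreover have "last (take (Suc k) ys) = x"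
    using k by (simp add: take_Suc_conv_app_nth)
  ultimately show "x \<in> last ` semi_induced_lifts V' E' V E lt p v"
    by (metis image_eqI)
qed

definition semi_induced_lift_ends ::
  "'b set \<Rightarrow> ('b \<Rightarrow> 'b \<Rightarrow> bool) \<Rightarrow> 'a set \<Rightarrow> ('a \<Rightarrow> 'a \<Rightarrow> bool) \<Rightarrow> ('a \<Rightarrow> 'a \<Rightarrow> bool)
     \<Rightarrow> ('b \<Rightarrow> 'a) \<Rightarrow> 'b set \<Rightarrow> 'b set" where
  "semi_induced_lift_ends V' E' V E lt p F = (\<Union>v\<in>F. last ` semi_induced_lifts V' E' V E lt p v)"

lemma semi_induced_lift_ends_subset: "semi_induced_lift_ends V' E' V E lt p F \<subseteq> V'"
  by (auto simp: semi_induced_lift_ends_def semi_induced_lifts_def is_path_def)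

lemma subset_semi_induced_lift_ends:
  assumes "covering V' E' V E p" and "F \<subseteq> V'"
  shows "F \<subseteq> semi_induced_lift_ends V' E' V E lt p F"
proof
  fix v assume "v \<in> F"
  then have "[v] \<in> semi_induced_lifts V' E' V E lt p v"
    using assms by (auto simp: semi_induced_lifts_def semi_induced_def covering_def)
  with \<open>v \<in> F\<close> show "v \<in> semi_induced_lift_ends V' E' V E lt p F"
    unfolding semi_induced_lift_ends_def by force
qed

lemma card_semi_induced_lift_ends_le:
  assumes "covering V' E' V E p" and "strict_total_order_on V lt" and "finite V"
    and "finite F" and "F \<subseteq> V'"
  shows "finite (semi_induced_lift_ends V' E' V E lt p F)"
    and "card (semi_induced_lift_ends V' E' V E lt p F) \<le> card F * 2 ^ (card V - 1)"
proof -
  let ?lifts = "semi_induced_lifts V' E' V E lt p"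
  have finite_lifts: "finite (?lifts v)" and card_lifts: "card (?lifts v) \<le> 2 ^ (card V - 1)"
    if "v \<in> F" for v
    using card_semi_induced_lifts_le[OF assms(1-3)] that assms(5) by auto
  show "finite (semi_induced_lift_ends V' E' V E lt p F)"
    using finite_lifts assms(4) by (simp add: semi_induced_lift_ends_def)
  have "card (semi_induced_lift_ends V' E' V E lt p F) \<le> (\<Sum>v\<in>F. card (last ` ?lifts v))"
    unfolding semi_induced_lift_ends_def by (rule card_UN_le[OF assms(4)])
  also have "\<dots> \<le> (\<Sum>v\<in>F. 2 ^ (card V - 1))"
  proof (rule sum_mono)
    fix v assume "v \<in> F"
    then show "card (last ` ?lifts v) \<le> 2 ^ (card V - 1)"
      using card_image_le[OF finite_lifts] card_lifts le_trans by blast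
  qed
  finally show "card (semi_induced_lift_ends V' E' V E lt p F) \<le> card F * 2 ^ (card V - 1)"
    by simp
qed

lemma is_path_semi_induced_lift:
  assumes "v \<in> F" and "ys \<in> semi_induced_lifts V' E' V E lt p v"
  defines "L \<equiv> semi_induced_lift_ends V' E' V E lt p F"
  shows "is_path L (induced_edges E' L) ys"
proof (rule is_path_induced_edges)
  show "is_path V' E' ys"
    using assms(2) by (simp add: semi_induced_lifts_def)
  show "set ys \<subseteq> L"
    using semi_induced_lifts_prefix_closed[OF assms(2)] assms(1)
    unfolding L_def semi_induced_lift_ends_def by blast
qed

lemma SIPL_semi_induced_lift_ends:
  fixes lt :: "'a \<Rightarrow> 'a \<Rightarrow> bool"
  assumes "covering V' E' V E p" and "graph V' E'" and "F \<subseteq> V'"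
  defines "L \<equiv> semi_induced_lift_ends V' E' V E lt p F"
  shows "SIPL L (induced_edges E' L) V E lt p F"
  unfolding SIPL_def
proof (intro ballI allI impI)
  fix v xs assume "v \<in> F" and xs: "semi_induced V E lt xs \<and> hd xs = p v"
  then obtain ys where "is_path V' E' ys" "map p ys = xs" "hd ys = v"
    using covering_lift_exists[OF assms(1,2)] assms(3) by (auto simp: semi_induced_def)
  with xs have "ys \<in> semi_induced_lifts V' E' V E lt p v"
    by (simp add: semi_induced_lifts_def)
  then have "is_path L (induced_edges E' L) ys"
    unfolding L_def by (rule is_path_semi_induced_lift[OF \<open>v \<in> F\<close>])
  then show "\<exists>ys. is_lift L (induced_edges E' L) p xs ys \<and> hd ys = v"
    using \<open>map p ys = xs\<close> \<open>hd ys = v\<close> by (auto simp: is_lift_def)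
qed

lemma connected_semi_induced_lift_ends:
  fixes lt :: "'a \<Rightarrow> 'a \<Rightarrow> bool"
  assumes "covering V' E' V E p" and "graph V' E'" and "F \<subseteq> V'"
    and "connected_graph F (induced_edges E' F)"
  defines "L \<equiv> semi_induced_lift_ends V' E' V E lt p F"
  shows "connected_graph L (induced_edges E' L)"
proof (rule connected_graph_induced_edgesI)
  show "symp E'"
    using assms(2) unfolding graph_def symp_def by blast
  show "connected_graph F (induced_edges E' F)"
    by (fact assms(4))
  show "F \<subseteq> L"
    unfolding L_def by (rule subset_semi_induced_lift_ends[OF assms(1,3)])
  fix u assume "u \<in> L"
  then obtain v ys where "v \<in> F" "ys \<in> semi_induced_lifts V' E' V E lt p v" "u = last ys"
    by (auto simp: L_def semi_induced_lift_ends_def)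
  moreover have "is_path L (induced_edges E' L) ys"
    unfolding L_def by (rule is_path_semi_induced_lift[OF \<open>v \<in> F\<close> \<open>ys \<in> _\<close>])
  ultimately show "\<exists>v\<in>F. (induced_edges E' L)\<^sup>*\<^sup>* v u"
    using is_path_rtranclp by (fastforce simp: semi_induced_lifts_def)
qed

theorem proposition3p10:
  fixes V :: "'a set" and E :: "'a \<Rightarrow> 'a \<Rightarrow> bool" and lt :: "'a \<Rightarrow> 'a \<Rightarrow> bool"
    and V' :: "'b set" and E' :: "'b \<Rightarrow> 'b \<Rightarrow> bool" and p :: "'b \<Rightarrow> 'a"
    and F :: "'b set" and m :: nat
  assumes "graph V E" and "finite V" and "card V = m"
    and "strict_total_order_on V lt"
    and "graph V' E'" and "covering V' E' V E p"
    and "finite F" and "F \<noteq> {}" and "F \<subseteq> V'"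
  shows "\<exists>L. L \<subseteq> V' \<and> finite L \<and> card L \<le> card F * 2 ^ (m - 1) \<and>
             SIPL L (induced_edges E' L) V E lt p F \<and>
             (connected_graph F (induced_edges E' F) \<longrightarrow> connected_graph L (induced_edges E' L))"
proof (intro exI conjI impI)
  let ?L = "semi_induced_lift_ends V' E' V E lt p F"
  show "?L \<subseteq> V'"
    by (rule semi_induced_lift_ends_subset)
  show "finite ?L" "card ?L \<le> card F * 2 ^ (m - 1)"
    using card_semi_induced_lift_ends_le[OF assms(6,4,2,7,9)] assms(3) by simp_all
  show "SIPL ?L (induced_edges E' ?L) V E lt p F"
    by (rule SIPL_semi_induced_lift_ends[OF assms(6,5,9)])
  show "connected_graph ?L (induced_edges E' ?L)" if "connected_graph F (induced_edges E' F)"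
    by (rule connected_semi_induced_lift_ends[OF assms(6,5,9) that])
qed

end
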